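(* Let $\mathcal{K}_1$ be an $\mathcal{ALCP}$ knowledge base over $(\mathcal{L}^1,N_C^1,N_R^1)$ and $\mathcal{K}_2$ one over $(\mathcal{L}^2,N_C^2,N_R^2)$, both ME-consistent. If $\mathcal{K}_1=\mathcal{K}_2$, $\mathcal{L}^1\subseteq\mathcal{L}^2$, $N_C^1\subseteq N_C^2$ and $N_R^1\subseteq N_R^2$, then for all concepts $C,D$ built over $N_C^1,N_R^1$ and all contexts $\kappa\in\mathcal{L}^1$, $\mathcal{B}_{\mathcal{K}_1}(C\sqsubseteq D\mid\kappa)=\mathcal{B}_{\mathcal{K}_2}(C\sqsubseteq D\mid\kappa)$, where each belief interval is computed with respect to the respective language.
   Context: For a propositional language $\mathcal{L}$ over a finite set $\mathrm{sig}(\mathcal{L})$ of variables, $\mathrm{Int}(\mathcal{L})$ is the set of truth assignments; $\mathcal{L}^1\subseteq\mathcal{L}^2$ means $\mathrm{sig}(\mathcal{L}^1)\subseteq\mathrm{sig}(\mathcal{L}^2)$. A probability distribution over $\mathcal{L}$ is $P:\mathrm{Int}(\mathcal{L})\to[0,1]$ summing to $1$, with $P(\phi)=\sum_{v\models\phi}P(v)$. A probabilistic constraint is $c_0+\sum_{i=1}^k c_i\,\mathsf{p}(\phi_i)\ge 0$ ($c_i\in\mathbb{R}$, $\phi_i\in\mathcal{L}$), satisfied by $P$ iff $c_0+\sum_ic_iP(\phi_i)\ge0$; $\mathrm{Mod}(\mathcal{R})$ is the set of distributions over $\mathcal{L}$ satisfying all constraints in $\mathcal{R}$; for consistent $\mathcal{R}$,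 $P^{ME}_{\mathcal{R}}$ is the unique maximizer in $\mathrm{Mod}(\mathcal{R})$ of $H(P)=-\sum_vP(v)\log P(v)$. Concepts over concept names $N_C$ and role names $N_R$: $C::=A\mid\neg C\mid C\sqcap C\mid\exists r.C$. An $\mathcal{L}$-GCI is $\langle C\sqsubseteq D:\kappa\rangle$, $\kappa\in\mathcal{L}$; an $\mathcal{L}$-TBox is a finite set of them; a KB over $(\mathcal{L},N_C,N_R)$ is $\mathcal{K}=(\mathcal{R},\mathcal{T})$ with constraints over $\mathcal{L}$ and GCIs using these symbols. A possible world $\mathcal{I}=(\Delta^{\mathcal{I}},\cdot^{\mathcal{I}},v^{\mathcal{I}})$ is a classical $\mathcal{ALC}$ interpretation of $N_C,N_R$ together with $v^{\mathcal{I}}\in\mathrm{Int}(\mathcal{L})$; it models $\langle C\sqsubseteq D:\kappa\rangle$ iff $v^{\mathcal{I}}\not\models\kappa$ or $C^{\mathcal{I}}\subseteq D^{\mathcal{I}}$. An $\mathcal{ALCP}$-interpretation $\mathcal{P}=(\mathfrak{I},P_{\mathfrak{I}})$ is a nonempty finite set of possible worlds with a probability distribution on it; $P^{\mathcal{P}}(v)=\sum_{\mathcal{I}\in\mathfrak{I},v^{\mathcal{I}}=v}P_{\mathfrak{I}}(\mathcal{I})$. $\mathcal{P}$ is an ME-$\mathcal{ALCP}$-model of $\mathcal{K}$ iff all its worlds model every GCI of $\mathcal{T}$ and $P^{\mathcal{P}}=P^{ME}_{\mathcal{R}}$; $\mathrm{Mod}_{ME}(\mathcal{K})$ is the set of these;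 $\mathcal{K}$ is ME-consistent iff it is nonempty. $\Pr_{\mathcal{P}}(C\sqsubseteq D\mid\kappa)=\big(\sum_{\mathcal{I}\in\mathfrak{I},v^{\mathcal{I}}\models\kappa,C^{\mathcal{I}}\subseteq D^{\mathcal{I}}}P_{\mathfrak{I}}(\mathcal{I})\big)/\big(\sum_{\mathcal{I}\in\mathfrak{I},v^{\mathcal{I}}\models\kappa}P_{\mathfrak{I}}(\mathcal{I})\big)$. The belief interval $\mathcal{B}_{\mathcal{K}}(C\sqsubseteq D\mid\kappa)=[\mathcal{B}^{s}_{\mathcal{K}},\mathcal{B}^{c}_{\mathcal{K}}]$ has as endpoints the infimum and supremum of $\Pr_{\mathcal{P}}(C\sqsubseteq D\mid\kappa)$ over $\mathcal{P}\in\mathrm{Mod}_{ME}(\mathcal{K})$. *)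

theory Defs
  imports Complex_Main
begin

datatype 'p pform = PTrue | PVar 'p | PNeg "'p pform" | PAnd "'p pform" "'p pform"

fun pvars :: "'p pform \<Rightarrow> 'p set" where
  "pvars PTrue = {}"
| "pvars (PVar a) = {a}"
| "pvars (PNeg f) = pvars f"
| "pvars (PAnd f g) = pvars f \<union> pvars g"

text \<open>A truth assignment over sig(L) = S is represented by the set of variables it makes true
  (a subset of S); Int(L) = Pow S.\<close>
fun psat :: "'p set \<Rightarrow> 'p pform \<Rightarrow> bool" where
  "psat v PTrue = True"
| "psat v (PVar a) = (a \<in> v)"
| "psat v (PNeg f) = (\<not> psat v f)"
| "psat v (PAnd f g) = (psat v f \<and> psat v g)"

definition is_dist :: "'p set \<Rightarrow> ('p set \<Rightarrow> real) \<Rightarrow> bool" where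
  "is_dist S P \<longleftrightarrow> (\<forall>v. 0 \<le> P v) \<and> (\<forall>v. v \<notin> Pow S \<longrightarrow> P v = 0) \<and> sum P (Pow S) = 1"

definition prob :: "'p set \<Rightarrow> ('p set \<Rightarrow> real) \<Rightarrow> 'p pform \<Rightarrow> real" where
  "prob S P f = (\<Sum>v\<in>{v\<in>Pow S. psat v f}. P v)"

text \<open>A probabilistic constraint c0 + sum_i ci p(phi_i) >= 0 is (c0, [(c1,phi1),...,(ck,phik)]).\<close>
type_synonym 'p pconstr = "real \<times> (real \<times> 'p pform) list"

definition constr_over :: "'p set \<Rightarrow> 'p pconstr \<Rightarrow> bool" where
  "constr_over S c \<longleftrightarrow> (\<forall>(ci, f) \<in> set (snd c). pvars f \<subseteq> S)"

definition sat_constr :: "'p set \<Rightarrow> ('p set \<Rightarrow> real) \<Rightarrow> 'p pconstr \<Rightarrow> bool" where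
  "sat_constr S P c \<longleftrightarrow> fst c + (\<Sum>(ci, f)\<leftarrow>snd c. ci * prob S P f) \<ge> 0"

definition Mod :: "'p set \<Rightarrow> 'p pconstr set \<Rightarrow> ('p set \<Rightarrow> real) set" where
  "Mod S R = {P. is_dist S P \<and> (\<forall>c\<in>R. sat_constr S P c)}"

definition entropy :: "'p set \<Rightarrow> ('p set \<Rightarrow> real) \<Rightarrow> real" where
  "entropy S P = - (\<Sum>v\<in>Pow S. P v * ln (P v))"

definition ME :: "'p set \<Rightarrow> 'p pconstr set \<Rightarrow> ('p set \<Rightarrow> real)" where
  "ME S R = (THE P. P \<in> Mod S R \<and> (\<forall>Q\<in>Mod S R. entropy S Q \<le> entropy S P))"

datatype ('c, 'r) concept = CName 'c | CNeg "('c, 'r) concept"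
  | CAnd "('c, 'r) concept" "('c, 'r) concept" | CEx 'r "('c, 'r) concept"

fun cnames :: "('c, 'r) concept \<Rightarrow> 'c set" where
  "cnames (CName A) = {A}"
| "cnames (CNeg C) = cnames C"
| "cnames (CAnd C D) = cnames C \<union> cnames D"
| "cnames (CEx r C) = cnames C"

fun rnames :: "('c, 'r) concept \<Rightarrow> 'r set" where
  "rnames (CName A) = {}"
| "rnames (CNeg C) = rnames C"
| "rnames (CAnd C D) = rnames C \<union> rnames D"
| "rnames (CEx r C) = {r} \<union> rnames C"

definition concept_over :: "'c set \<Rightarrow> 'r set \<Rightarrow> ('c, 'r) concept \<Rightarrow> bool" where
  "concept_over NC NR C \<longleftrightarrow> cnames C \<subseteq> NC \<and> rnames C \<subseteq> NR"

record ('c, 'r, 'd, 'p) world =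
  wdom :: "'d set"
  wcon :: "'c \<Rightarrow> 'd set"
  wrole :: "'r \<Rightarrow> ('d \<times> 'd) set"
  wval :: "'p set"

text \<open>Symbols outside the signature are interpreted canonically as empty, so that a world
  is exactly an interpretation of N_C, N_R plus an element of Int(L).\<close>
definition is_world :: "'p set \<Rightarrow> 'c set \<Rightarrow> 'r set \<Rightarrow> ('c, 'r, 'd, 'p) world \<Rightarrow> bool" where
  "is_world S NC NR w \<longleftrightarrow> wdom w \<noteq> {}
     \<and> (\<forall>A. wcon w A \<subseteq> wdom w) \<and> (\<forall>A. A \<notin> NC \<longrightarrow> wcon w A = {})
     \<and> (\<forall>r. wrole w r \<subseteq> wdom w \<times> wdom w) \<and> (\<forall>r. r \<notin> NR \<longrightarrow> wrole w r = {})
     \<and> wval w \<subseteq> S"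

fun cext :: "('c, 'r, 'd, 'p) world \<Rightarrow> ('c, 'r) concept \<Rightarrow> 'd set" where
  "cext w (CName A) = wcon w A"
| "cext w (CNeg C) = wdom w - cext w C"
| "cext w (CAnd C D) = cext w C \<inter> cext w D"
| "cext w (CEx r C) = {x \<in> wdom w. \<exists>y. (x, y) \<in> wrole w r \<and> y \<in> cext w C}"

type_synonym ('c, 'r, 'p) gci = "('c, 'r) concept \<times> ('c, 'r) concept \<times> 'p pform"

definition models_gci :: "('c, 'r, 'd, 'p) world \<Rightarrow> ('c, 'r, 'p) gci \<Rightarrow> bool" where
  "models_gci w g = (case g of (C, D, k) \<Rightarrow> \<not> psat (wval w) k \<or> cext w C \<subseteq> cext w D)"

type_synonym ('c, 'r, 'p) kb = "'p pconstr set \<times> ('c, 'r, 'p) gci set"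

definition kb_over :: "'p set \<Rightarrow> 'c set \<Rightarrow> 'r set \<Rightarrow> ('c, 'r, 'p) kb \<Rightarrow> bool" where
  "kb_over S NC NR K \<longleftrightarrow> finite (fst K) \<and> finite (snd K)
     \<and> (\<forall>c\<in>fst K. constr_over S c)
     \<and> (\<forall>(C, D, k) \<in> snd K. concept_over NC NR C \<and> concept_over NC NR D \<and> pvars k \<subseteq> S)"

definition alcp_interp :: "'p set \<Rightarrow> 'c set \<Rightarrow> 'r set
    \<Rightarrow> ('c, 'r, 'd, 'p) world set \<Rightarrow> (('c, 'r, 'd, 'p) world \<Rightarrow> real) \<Rightarrow> bool" where
  "alcp_interp S NC NR W Pw \<longleftrightarrow> finite W \<and> W \<noteq> {} \<and> (\<forall>w\<in>W. is_world S NC NR w)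
     \<and> (\<forall>w\<in>W. 0 \<le> Pw w) \<and> sum Pw W = 1"

definition induced_dist :: "('c, 'r, 'd, 'p) world set \<Rightarrow> (('c, 'r, 'd, 'p) world \<Rightarrow> real)
    \<Rightarrow> 'p set \<Rightarrow> real" where
  "induced_dist W Pw v = (\<Sum>w\<in>{w\<in>W. wval w = v}. Pw w)"

definition Mod_ME :: "'p set \<Rightarrow> 'c set \<Rightarrow> 'r set \<Rightarrow> ('c, 'r, 'p) kb
    \<Rightarrow> (('c, 'r, 'd, 'p) world set \<times> (('c, 'r, 'd, 'p) world \<Rightarrow> real)) set" where
  "Mod_ME S NC NR K = {(W, Pw). alcp_interp S NC NR W Pw
     \<and> (\<forall>w\<in>W. \<forall>g\<in>snd K. models_gci w g)
     \<and> induced_dist W Pw = ME S (fst K)}"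

definition ME_consistent :: "'d itself \<Rightarrow> 'p set \<Rightarrow> 'c set \<Rightarrow> 'r set \<Rightarrow> ('c, 'r, 'p) kb \<Rightarrow> bool" where
  "ME_consistent _ S NC NR K \<longleftrightarrow> (Mod_ME S NC NR K :: (('c, 'r, 'd, 'p) world set \<times> _) set) \<noteq> {}"

definition cond_pr :: "('c, 'r, 'd, 'p) world set \<Rightarrow> (('c, 'r, 'd, 'p) world \<Rightarrow> real)
    \<Rightarrow> ('c, 'r) concept \<Rightarrow> ('c, 'r) concept \<Rightarrow> 'p pform \<Rightarrow> real" where
  "cond_pr W Pw C D k =
     (\<Sum>w\<in>{w\<in>W. psat (wval w) k \<and> cext w C \<subseteq> cext w D}. Pw w)
     / (\<Sum>w\<in>{w\<in>W. psat (wval w) k}. Pw w)"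

definition belief_interval :: "'d itself \<Rightarrow> 'p set \<Rightarrow> 'c set \<Rightarrow> 'r set \<Rightarrow> ('c, 'r, 'p) kb
    \<Rightarrow> ('c, 'r) concept \<Rightarrow> ('c, 'r) concept \<Rightarrow> 'p pform \<Rightarrow> real \<times> real" where
  "belief_interval _ S NC NR K C D k =
     (let B = (\<lambda>(W, Pw). cond_pr W Pw C D k) `
              (Mod_ME S NC NR K :: (('c, 'r, 'd, 'p) world set \<times> _) set)
      in (Inf B, Sup B))"

end

theory Submission
  imports Defs "HOL-Analysis.Analysis" "HOL-Real_Asymp.Real_Asymp"
begin

text \<open>
  Enlarging the signature from S1 to S2 does not move the maximum entropy distribution on the
  old variables. Spreading ME over S1 uniformly over the 2^|S2 - S1| extensions of each
  valuation adds exactly |S2 - S1| ln 2 to the entropy, while by the log-sum inequality no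
  distribution over S2 has more entropy than its marginal on S1 plus |S2 - S1| ln 2. Hence the
  marginal of ME over S2 is an entropy maximiser over S1, and by strict concavity it is ME over S1.

  With the marginals matched, ME-models transfer in both directions without changing the
  probability of a GCI in the smaller vocabulary: a model over the larger signature is restricted
  world by world, and a model over the smaller one is extended by giving each world every
  valuation over S2 above its own, weighted by ME over S2 conditioned on the shared restriction.
  So both belief intervals are the Inf and Sup of the same set of numbers.
\<close>

section \<open>Entropy and the maximum entropy distribution\<close>

lemma xlnx_ge_tangent:
  fixes x c :: real
  assumes "0 \<le> x" "0 < c"
  shows "x * ln c + (x - c) \<le> x * ln x"
proof (cases "x = 0")
  case False
  with assms have x: "0 < x" by simp
  with assms have "ln c - ln x \<le> (c - x) / x" by (intro ln_diff_le)
  with x show ?thesis by (simp add: field_simps)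
qed (use assms in simp)

lemma xlnx_gt_tangent:
  fixes x c :: real
  assumes "0 \<le> x" "0 < c" "x \<noteq> c"
  shows "x * ln c + (x - c) < x * ln x"
proof (cases "x = 0")
  case False
  with assms have x: "0 < x" by simp
  with assms have "ln c - ln x < (c - x) / x" by (intro ln_diff_less) auto
  with x show ?thesis by (simp add: field_simps)
qed (use assms in simp)

lemma xlnx_midpoint_less:
  fixes a b :: real
  assumes "0 \<le> a" "0 \<le> b" "a \<noteq> b"
  shows "(a + b) / 2 * ln ((a + b) / 2) < (a * ln a + b * ln b) / 2"
proof -
  define m where "m = (a + b) / 2"
  have "0 < m" "a \<noteq> m" using assms by (auto simp: m_def)
  with assms have "a * ln m + (a - m) < a * ln a" "b * ln m + (b - m) \<le> b * ln b"
    by (auto intro: xlnx_gt_tangent xlnx_ge_tangent)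
  moreover have "a * ln m + b * ln m + (a - m) + (b - m) = 2 * (m * ln m)"
    by (simp add: m_def algebra_simps)
  ultimately show ?thesis unfolding m_def[symmetric] by argo
qed

lemma xlnx_midpoint_le:
  fixes a b :: real
  assumes "0 \<le> a" "0 \<le> b"
  shows "(a + b) / 2 * ln ((a + b) / 2) \<le> (a * ln a + b * ln b) / 2"
  using xlnx_midpoint_less[OF assms] by (cases "a = b") auto

lemma xlnx_divide:
  fixes a N :: real
  assumes "0 \<le> a" "0 < N"
  shows "a * ln (a / N) = a * ln a - a * ln N"
  using assms by (cases "a = 0") (auto simp: ln_div algebra_simps)

lemma continuous_on_xlnx: "continuous_on {0..} (\<lambda>x::real. x * ln x)"
  unfolding continuous_on_eq_continuous_within
proof
  fix x :: real
  assume "x \<in> {0..}"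
  then consider "x = 0" | "0 < x" by fastforce
  then show "continuous (at x within {0..}) (\<lambda>x. x * ln x)"
  proof cases
    case 1
    have "((\<lambda>x::real. x * ln x) \<longlongrightarrow> 0) (at_right 0)" by real_asymp
    then show ?thesis unfolding 1 continuous_within at_within_Ici_at_right by simp
  next
    case 2
    then have "isCont (\<lambda>x. x * ln x) x" by (intro continuous_intros) auto
    then show ?thesis by (rule continuous_at_imp_continuous_at_within)
  qed
qed

lemma sat_constr_midpoint:
  assumes "sat_constr S P c" "sat_constr S Q c"
  shows "sat_constr S (\<lambda>v. (P v + Q v) / 2) c"
proof -
  have "prob S (\<lambda>v. (P v + Q v) / 2) f = (prob S P f + prob S Q f) / 2" for f
    unfolding prob_def by (simp add: sum.distrib flip: sum_divide_distrib)
  then have "(\<Sum>(ci, f)\<leftarrow>l. ci * prob S (\<lambda>v. (P v + Q v) / 2) f)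
      = ((\<Sum>(ci, f)\<leftarrow>l. ci * prob S P f) + (\<Sum>(ci, f)\<leftarrow>l. ci * prob S Q f)) / 2" for l
    by (induction l) (auto simp: algebra_simps add_divide_distrib)
  from this[of "snd c"] assms show ?thesis unfolding sat_constr_def by argo
qed

lemma Mod_midpoint:
  assumes "P \<in> Mod S R" "Q \<in> Mod S R"
  shows "(\<lambda>v. (P v + Q v) / 2) \<in> Mod S R"
proof -
  have "is_dist S (\<lambda>v. (P v + Q v) / 2)"
    using assms unfolding Mod_def is_dist_def by (auto simp: sum.distrib simp flip: sum_divide_distrib)
  with assms show ?thesis unfolding Mod_def by (blast intro: sat_constr_midpoint)
qed

lemma entropy_midpoint_gt:
  assumes "finite S" "is_dist S P" "is_dist S Q" "P \<noteq> Q"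
  shows "(entropy S P + entropy S Q) / 2 < entropy S (\<lambda>v. (P v + Q v) / 2)"
proof -
  obtain v where v: "v \<in> Pow S" "P v \<noteq> Q v"
    using assms(2-4) unfolding is_dist_def by (metis ext)
  have "0 \<le> P u" "0 \<le> Q u" for u
    using assms(2,3) unfolding is_dist_def by auto
  with assms(1) v have "(\<Sum>u\<in>Pow S. (P u + Q u) / 2 * ln ((P u + Q u) / 2))
      < (\<Sum>u\<in>Pow S. (P u * ln (P u) + Q u * ln (Q u)) / 2)"
    by (intro sum_strict_mono_ex1 ballI bexI[of _ v] xlnx_midpoint_le xlnx_midpoint_less) auto
  then show ?thesis unfolding entropy_def by (simp add: sum.distrib flip: sum_divide_distrib)
qed

lemma max_entropy_unique:
  assumes "finite S" "P \<in> Mod S R" "Q \<in> Mod S R"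
    and "\<forall>X\<in>Mod S R. entropy S X \<le> entropy S P" "\<forall>X\<in>Mod S R. entropy S X \<le> entropy S Q"
  shows "P = Q"
proof (rule ccontr)
  assume "P \<noteq> Q"
  with assms have "(entropy S P + entropy S Q) / 2 < entropy S (\<lambda>v. (P v + Q v) / 2)"
    by (intro entropy_midpoint_gt) (auto simp: Mod_def)
  moreover have "entropy S (\<lambda>v. (P v + Q v) / 2) \<le> entropy S P"
    using assms(4) Mod_midpoint[OF assms(2,3)] by blast
  moreover have "entropy S P = entropy S Q"
    using assms by (meson order_antisym)
  ultimately show False by argo
qed

lemma continuous_on_entropy: "continuous_on {P. \<forall>v. 0 \<le> P v} (entropy S)"
proof -
  have "continuous_on {P. \<forall>v. 0 \<le> P v} (\<lambda>P :: 'a set \<Rightarrow> real. P v * ln (P v))" for v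
    by (rule continuous_on_compose2[OF continuous_on_xlnx
          continuous_on_subset[OF continuous_on_product_coordinates]]) auto
  then show ?thesis
    unfolding entropy_def[abs_def] by (intro continuous_on_minus continuous_on_sum)
qed

lemma continuous_on_constraint_sum:
  "continuous_on UNIV (\<lambda>P. \<Sum>(ci, f)\<leftarrow>l. ci * prob S P f)"
  by (induction l) (auto simp: prob_def intro!: continuous_intros)

lemma compact_Mod:
  assumes "finite S"
  shows "compact (Mod S R)"
proof -
  define X where "X v = (if v \<in> Pow S then {0..1::real} else {0})" for v
  have "compactin (product_topology (\<lambda>_. euclidean) UNIV) (PiE UNIV X)"
    by (simp add: compactin_PiE X_def compactin_euclidean_iff)
  then have box: "compact (PiE UNIV X)"
    by (simp add: euclidean_product_topology compactin_euclidean_iff)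
  have "closed {P :: 'a set \<Rightarrow> real. sum P (Pow S) = 1}"
    by (intro closed_Collect_eq continuous_intros continuous_on_product_coordinates)
  moreover have "closed {P. sat_constr S P c}" for c
    unfolding sat_constr_def
    by (intro closed_Collect_le continuous_intros continuous_on_constraint_sum)
  ultimately have constraints: "closed ({P. sum P (Pow S) = 1} \<inter> (\<Inter>c\<in>R. {P. sat_constr S P c}))"
    by (intro closed_Int closed_INT) auto
  have "is_dist S P \<longleftrightarrow> P \<in> PiE UNIV X \<and> sum P (Pow S) = 1" for P
  proof
    assume P: "is_dist S P"
    have "P v \<le> sum P (Pow S)" if "v \<in> Pow S" for v
      using P that assms by (intro member_le_sum) (auto simp: is_dist_def)
    with P show "P \<in> PiE UNIV X \<and> sum P (Pow S) = 1"
      by (auto simp: is_dist_def X_def PiE_iff)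
  qed (auto simp: is_dist_def X_def PiE_iff split: if_splits)
  then have "Mod S R = PiE UNIV X \<inter> ({P. sum P (Pow S) = 1} \<inter> (\<Inter>c\<in>R. {P. sat_constr S P c}))"
    by (auto simp: Mod_def)
  then show ?thesis using compact_Int_closed[OF box constraints] by simp
qed

lemma max_entropy_exists:
  assumes "finite S" "Mod S R \<noteq> {}"
  shows "\<exists>P\<in>Mod S R. \<forall>Q\<in>Mod S R. entropy S Q \<le> entropy S P"
proof -
  have "continuous_on (Mod S R) (entropy S)"
    by (rule continuous_on_subset[OF continuous_on_entropy]) (auto simp: Mod_def is_dist_def)
  from continuous_attains_sup[OF compact_Mod[OF assms(1)] assms(2) this] show ?thesis .
qed

lemma ME_eqI:
  assumes "finite S" "P \<in> Mod S R" "\<forall>Q\<in>Mod S R. entropy S Q \<le> entropy S P"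
  shows "ME S R = P"
  unfolding ME_def
proof (rule the_equality)
  show "P \<in> Mod S R \<and> (\<forall>Q\<in>Mod S R. entropy S Q \<le> entropy S P)"
    using assms by blast
  show "Q = P" if "Q \<in> Mod S R \<and> (\<forall>X\<in>Mod S R. entropy S X \<le> entropy S Q)" for Q
    using that assms by (intro max_entropy_unique[OF assms(1)]) auto
qed

lemma ME_max_entropy:
  assumes "finite S" "Mod S R \<noteq> {}"
  shows "ME S R \<in> Mod S R" "\<forall>Q\<in>Mod S R. entropy S Q \<le> entropy S (ME S R)"
proof -
  obtain P where "P \<in> Mod S R" "\<forall>Q\<in>Mod S R. entropy S Q \<le> entropy S P"
    using max_entropy_exists[OF assms] by blast
  moreover from ME_eqI[OF assms(1) this] have "ME S R = P" .
  ultimately show "ME S R \<in> Mod S R" "\<forall>Q\<in>Mod S R. entropy S Q \<le> entropy S (ME S R)"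
    by simp_all
qed

section \<open>Pushforward and gluing of finite weights\<close>

definition pushforward :: "('a \<Rightarrow> 'b) \<Rightarrow> 'a set \<Rightarrow> ('a \<Rightarrow> real) \<Rightarrow> 'b \<Rightarrow> real" where
  "pushforward f A p y = (\<Sum>x\<in>{x\<in>A. f x = y}. p x)"

lemma pushforward_nonneg: "(\<And>x. x \<in> A \<Longrightarrow> 0 \<le> p x) \<Longrightarrow> 0 \<le> pushforward f A p y"
  unfolding pushforward_def by (auto intro: sum_nonneg)

lemma le_pushforward:
  assumes "finite A" "\<And>x. x \<in> A \<Longrightarrow> 0 \<le> p x" "x \<in> A"
  shows "p x \<le> pushforward f A p (f x)"
  unfolding pushforward_def using assms by (intro member_le_sum) auto

lemma pushforward_cong:
  "(\<And>x. x \<in> A \<Longrightarrow> f x = g x) \<Longrightarrow> pushforward f A p = pushforward g A p"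
  unfolding pushforward_def by (intro ext sum.cong) auto

lemma sum_pushforward:
  assumes "finite A" "finite B" "f ` A \<subseteq> B"
  shows "(\<Sum>y\<in>{y\<in>B. P y}. pushforward f A p y) = (\<Sum>x\<in>{x\<in>A. P (f x)}. p x)"
proof -
  have "(\<Sum>y\<in>{y\<in>B. P y}. sum p {x\<in>{x\<in>A. P (f x)}. f x = y}) = (\<Sum>x\<in>{x\<in>A. P (f x)}. p x)"
    using assms by (intro sum.group) auto
  moreover have "{x\<in>{x\<in>A. P (f x)}. f x = y} = {x\<in>A. f x = y}" if "P y" for y
    using that by auto
  ultimately show ?thesis
    unfolding pushforward_def by (metis (no_types, lifting) mem_Collect_eq sum.cong)
qed

lemma pushforward_pushforward:
  assumes "finite A" "finite B" "f ` A \<subseteq> B"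
  shows "pushforward g B (pushforward f A p) = pushforward (g \<circ> f) A p"
proof
  fix z
  show "pushforward g B (pushforward f A p) z = pushforward (g \<circ> f) A p z"
    using sum_pushforward[OF assms, where P = "\<lambda>y. g y = z" and p = p] by (simp add: pushforward_def)
qed

lemma sum_pushforward_total:
  assumes "finite A" "finite B" "f ` A \<subseteq> B"
  shows "sum (pushforward f A p) B = sum p A"
  using sum_pushforward[OF assms, where P = "\<lambda>_. True" and p = p] by simp

definition glued :: "('a \<Rightarrow> 'v) \<Rightarrow> 'a set \<Rightarrow> ('b \<Rightarrow> 'v) \<Rightarrow> 'b set \<Rightarrow> ('a \<times> 'b) set" where
  "glued f A g B = {(x, y) \<in> A \<times> B. f x = g y}"

text \<open>Gluing p and r along a common image distribution: x and y are independent given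
  f x = g y. If the common mass is 0 the division yields 0, which is harmless since then p x = 0.\<close>

definition glued_weight :: "('a \<Rightarrow> 'v) \<Rightarrow> 'a set \<Rightarrow> ('a \<Rightarrow> real) \<Rightarrow> ('b \<Rightarrow> real) \<Rightarrow> 'a \<times> 'b \<Rightarrow> real"
  where "glued_weight f A p r = (\<lambda>(x, y). p x * r y / pushforward f A p (f x))"

lemma finite_glued: "finite A \<Longrightarrow> finite B \<Longrightarrow> finite (glued f A g B)"
  unfolding glued_def by (auto intro: finite_subset[of _ "A \<times> B"])

lemma glued_weight_nonneg:
  "(\<And>x. x \<in> A \<Longrightarrow> 0 \<le> p x) \<Longrightarrow> 0 \<le> r y \<Longrightarrow> x \<in> A \<Longrightarrow> 0 \<le> glued_weight f A p r (x, y)"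
  unfolding glued_weight_def by (auto intro!: divide_nonneg_nonneg pushforward_nonneg)

lemma pushforward_fst_glued:
  assumes "finite A" "finite B" "\<And>x. x \<in> A \<Longrightarrow> 0 \<le> p x"
    and "pushforward g B r = pushforward f A p" and "x \<in> A"
  shows "pushforward fst (glued f A g B) (glued_weight f A p r) x = p x"
proof -
  define c where "c = pushforward f A p (f x)"
  have "{z \<in> glued f A g B. fst z = x} = Pair x ` {y \<in> B. g y = f x}"
    using assms(5) by (auto simp: glued_def)
  then have "pushforward fst (glued f A g B) (glued_weight f A p r) x
      = (\<Sum>y\<in>{y \<in> B. g y = f x}. p x * r y / c)"
    by (simp add: pushforward_def sum.reindex inj_on_def glued_weight_def c_def)
  also have "\<dots> = p x * pushforward g B r (f x) / c"
    by (simp add: pushforward_def sum_distrib_left sum_divide_distrib)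
  also have "\<dots> = p x"
  proof -
    have "p x \<le> c"
      unfolding c_def using assms(1,3,5) by (rule le_pushforward)
    moreover have "0 \<le> p x" using assms(3,5) .
    ultimately show ?thesis using assms(4) by (cases "c = 0") (auto simp: c_def)
  qed
  finally show ?thesis .
qed

lemma pushforward_snd_glued:
  assumes "finite A" "finite B" "\<And>y. y \<in> B \<Longrightarrow> 0 \<le> r y"
    and "pushforward g B r = pushforward f A p"
  shows "pushforward snd (glued f A g B) (glued_weight f A p r) y = (if y \<in> B then r y else 0)"
proof (cases "y \<in> B")
  case True
  define c where "c = pushforward f A p (g y)"
  have "{z \<in> glued f A g B. snd z = y} = (\<lambda>x. (x, y)) ` {x \<in> A. f x = g y}"
    using True by (auto simp: glued_def)
  then have "pushforward snd (glued f A g B) (glued_weight f A p r) y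
      = (\<Sum>x\<in>{x \<in> A. f x = g y}. p x * r y / c)"
    by (simp add: pushforward_def sum.reindex inj_on_def glued_weight_def c_def)
  also have "\<dots> = c * r y / c"
    by (simp add: c_def pushforward_def sum_distrib_right sum_divide_distrib)
  also have "\<dots> = r y"
  proof -
    have "r y \<le> c"
      unfolding c_def assms(4)[symmetric] using assms(2,3) True by (rule le_pushforward)
    moreover have "0 \<le> r y" using assms(3) True .
    ultimately show ?thesis by (cases "c = 0") auto
  qed
  finally show ?thesis using True by simp
next
  case False
  then have "{z \<in> glued f A g B. snd z = y} = {}" by (auto simp: glued_def)
  with False show ?thesis unfolding pushforward_def by (metis sum.empty)
qed

lemma sum_glued_fst:
  assumes "finite A" "finite B" "\<And>x. x \<in> A \<Longrightarrow> 0 \<le> p x"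
    and "pushforward g B r = pushforward f A p"
  shows "(\<Sum>z\<in>{z \<in> glued f A g B. P (fst z)}. glued_weight f A p r z) = (\<Sum>x\<in>{x \<in> A. P x}. p x)"
proof -
  have "(\<Sum>z\<in>{z \<in> glued f A g B. P (fst z)}. glued_weight f A p r z)
      = (\<Sum>x\<in>{x \<in> A. P x}. pushforward fst (glued f A g B) (glued_weight f A p r) x)"
    using assms(1,2) by (intro sum_pushforward[symmetric] finite_glued) (auto simp: glued_def)
  also have "\<dots> = (\<Sum>x\<in>{x \<in> A. P x}. p x)"
    using assms by (intro sum.cong) (auto simp: pushforward_fst_glued)
  finally show ?thesis .
qed

section \<open>Marginals over a smaller signature\<close>

definition marginal :: "'p set \<Rightarrow> 'p set \<Rightarrow> ('p set \<Rightarrow> real) \<Rightarrow> 'p set \<Rightarrow> real" where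
  "marginal S1 S2 Q = pushforward (\<lambda>u. u \<inter> S1) (Pow S2) Q"

definition uniform_extension :: "'p set \<Rightarrow> 'p set \<Rightarrow> ('p set \<Rightarrow> real) \<Rightarrow> 'p set \<Rightarrow> real" where
  "uniform_extension S1 S2 P u = (if u \<subseteq> S2 then P (u \<inter> S1) / 2 ^ card (S2 - S1) else 0)"

lemma card_restriction_fiber:
  assumes "finite S2" "S1 \<subseteq> S2" "v \<subseteq> S1"
  shows "card {u \<in> Pow S2. u \<inter> S1 = v} = 2 ^ card (S2 - S1)"
proof -
  have "{u \<in> Pow S2. u \<inter> S1 = v} = (\<union>) v ` Pow (S2 - S1)"
  proof (intro equalityI subsetI)
    fix u assume "u \<in> {u \<in> Pow S2. u \<inter> S1 = v}"
    then show "u \<in> (\<union>) v ` Pow (S2 - S1)" by (intro image_eqI[of _ _ "u - S1"]) auto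
  qed (use assms in auto)
  moreover have "inj_on ((\<union>) v) (Pow (S2 - S1))"
    using assms(3) by (auto simp: inj_on_def)
  ultimately show ?thesis
    using assms(1) by (simp add: card_image card_Pow)
qed

lemma sum_marginal:
  assumes "finite S2" "S1 \<subseteq> S2"
  shows "sum (marginal S1 S2 Q) (Pow S1) = sum Q (Pow S2)"
  unfolding marginal_def using assms by (intro sum_pushforward_total) (auto intro: finite_subset)

lemma marginal_eq_0:
  assumes "\<not> v \<subseteq> S1"
  shows "marginal S1 S2 Q v = 0"
  unfolding marginal_def pushforward_def using assms by (intro sum.neutral) auto

lemma is_dist_marginal:
  assumes "finite S2" "S1 \<subseteq> S2" "is_dist S2 Q"
  shows "is_dist S1 (marginal S1 S2 Q)"
  using assms(3) sum_marginal[OF assms(1,2)] marginal_eq_0[of _ S1 S2 Q]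
  unfolding is_dist_def by (auto simp: marginal_def intro: pushforward_nonneg)

lemma marginal_uniform_extension:
  assumes "finite S2" "S1 \<subseteq> S2" "\<forall>v. v \<notin> Pow S1 \<longrightarrow> P v = 0"
  shows "marginal S1 S2 (uniform_extension S1 S2 P) = P"
proof
  fix v
  show "marginal S1 S2 (uniform_extension S1 S2 P) v = P v"
  proof (cases "v \<in> Pow S1")
    case True
    have "marginal S1 S2 (uniform_extension S1 S2 P) v
        = (\<Sum>u\<in>{u \<in> Pow S2. u \<inter> S1 = v}. P v / 2 ^ card (S2 - S1))"
      unfolding marginal_def pushforward_def by (intro sum.cong) (auto simp: uniform_extension_def)
    also have "\<dots> = P v"
      using card_restriction_fiber[OF assms(1,2)] True by simp
    finally show ?thesis .
  qed (use assms(3) marginal_eq_0 in simp)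
qed

lemma marginal_eq_self:
  assumes "finite S2" "S1 \<subseteq> S2" "\<forall>v. v \<notin> Pow S1 \<longrightarrow> P v = 0"
  shows "marginal S1 S2 P = P"
proof
  fix v
  show "marginal S1 S2 P v = P v"
  proof (cases "v \<in> Pow S1")
    case True
    then have "sum P {u \<in> Pow S2. u \<inter> S1 = v} = sum P {v}"
      using assms by (intro sum.mono_neutral_right) auto
    then show ?thesis by (simp add: marginal_def pushforward_def)
  qed (use assms(3) marginal_eq_0 in simp)
qed

lemma is_dist_uniform_extension:
  assumes "finite S2" "S1 \<subseteq> S2" "is_dist S1 P"
  shows "is_dist S2 (uniform_extension S1 S2 P)"
proof -
  have "sum (uniform_extension S1 S2 P) (Pow S2) = sum P (Pow S1)"
    using sum_marginal[OF assms(1,2)] marginal_uniform_extension[OF assms(1,2)] assms(3)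
    unfolding is_dist_def by metis
  with assms(3) show ?thesis
    unfolding is_dist_def uniform_extension_def by auto
qed

lemma psat_Int: "pvars f \<subseteq> S \<Longrightarrow> psat (u \<inter> S) f = psat u f"
  by (induction f) auto

lemma prob_marginal:
  assumes "finite S2" "S1 \<subseteq> S2" "pvars f \<subseteq> S1"
  shows "prob S1 (marginal S1 S2 Q) f = prob S2 Q f"
proof -
  have "prob S1 (marginal S1 S2 Q) f = (\<Sum>u\<in>{u \<in> Pow S2. psat (u \<inter> S1) f}. Q u)"
    unfolding prob_def marginal_def using assms by (intro sum_pushforward) (auto intro: finite_subset)
  also have "\<dots> = prob S2 Q f"
    unfolding prob_def using assms(3) by (simp add: psat_Int)
  finally show ?thesis .
qed

lemma sat_constr_marginal:
  assumes "finite S2" "S1 \<subseteq> S2" "constr_over S1 c"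
  shows "sat_constr S1 (marginal S1 S2 Q) c = sat_constr S2 Q c"
proof -
  have "(\<Sum>(ci, f)\<leftarrow>snd c. ci * prob S1 (marginal S1 S2 Q) f) = (\<Sum>(ci, f)\<leftarrow>snd c. ci * prob S2 Q f)"
    using assms by (intro arg_cong[where f = sum_list] map_cong)
      (auto simp: constr_over_def prob_marginal)
  then show ?thesis unfolding sat_constr_def by simp
qed

lemma marginal_in_Mod:
  assumes "finite S2" "S1 \<subseteq> S2" "\<forall>c\<in>R. constr_over S1 c" "Q \<in> Mod S2 R"
  shows "marginal S1 S2 Q \<in> Mod S1 R"
  using assms is_dist_marginal[OF assms(1,2)] sat_constr_marginal[OF assms(1,2)]
  unfolding Mod_def by auto

lemma uniform_extension_in_Mod:
  assumes "finite S2" "S1 \<subseteq> S2" "\<forall>c\<in>R. constr_over S1 c" "P \<in> Mod S1 R"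
  shows "uniform_extension S1 S2 P \<in> Mod S2 R"
proof -
  have "marginal S1 S2 (uniform_extension S1 S2 P) = P"
    using assms by (intro marginal_uniform_extension) (auto simp: Mod_def is_dist_def)
  with assms sat_constr_marginal[OF assms(1,2), of _ "uniform_extension S1 S2 P"]
  show ?thesis using is_dist_uniform_extension unfolding Mod_def by auto
qed

lemma log_sum_inequality_uniform:
  fixes q :: "'a \<Rightarrow> real"
  assumes "finite A" "A \<noteq> {}" "\<And>u. u \<in> A \<Longrightarrow> 0 \<le> q u"
  shows "sum q A * ln (sum q A / card A) \<le> (\<Sum>u\<in>A. q u * ln (q u))"
proof (cases "sum q A = 0")
  case True
  with assms have "\<forall>u\<in>A. q u = 0" by (simp add: sum_nonneg_eq_0_iff)
  with True show ?thesis by simp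
next
  case False
  define c where "c = sum q A / card A"
  have "0 < c"
    using False assms sum_nonneg[of A q] by (simp add: c_def card_gt_0_iff)
  with assms have "(\<Sum>u\<in>A. q u * ln c + (q u - c)) \<le> (\<Sum>u\<in>A. q u * ln (q u))"
    by (intro sum_mono xlnx_ge_tangent) auto
  moreover have "(\<Sum>u\<in>A. q u * ln c + (q u - c)) = sum q A * ln c"
    using assms by (simp add: sum.distrib sum_subtractf c_def flip: sum_distrib_right)
  ultimately show ?thesis by (simp add: c_def)
qed

lemma entropy_uniform_extension:
  assumes "finite S2" "S1 \<subseteq> S2" "is_dist S1 P"
  shows "entropy S2 (uniform_extension S1 S2 P) = entropy S1 P + card (S2 - S1) * ln 2"
proof -
  define N :: real where "N = 2 ^ card (S2 - S1)"
  let ?E = "uniform_extension S1 S2 P"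
  have "marginal S1 S2 (\<lambda>u. ?E u * ln (?E u)) v = P v * ln (P v) - P v * ln N"
    if "v \<in> Pow S1" for v
  proof -
    have "marginal S1 S2 (\<lambda>u. ?E u * ln (?E u)) v
        = (\<Sum>u\<in>{u \<in> Pow S2. u \<inter> S1 = v}. P v / N * ln (P v / N))"
      unfolding marginal_def pushforward_def
      by (intro sum.cong) (auto simp: uniform_extension_def N_def)
    also have "\<dots> = P v * ln (P v / N)"
      using card_restriction_fiber[OF assms(1,2)] that by (simp add: N_def)
    also have "\<dots> = P v * ln (P v) - P v * ln N"
      using assms(3) by (intro xlnx_divide) (auto simp: is_dist_def N_def)
    finally show ?thesis .
  qed
  then have "(\<Sum>u\<in>Pow S2. ?E u * ln (?E u)) = (\<Sum>v\<in>Pow S1. P v * ln (P v) - P v * ln N)"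
    by (simp add: sum_marginal[OF assms(1,2), symmetric])
  also have "\<dots> = (\<Sum>v\<in>Pow S1. P v * ln (P v)) - ln N"
    using assms(3) by (simp add: sum_subtractf is_dist_def flip: sum_distrib_right)
  finally show ?thesis by (simp add: entropy_def N_def ln_realpow)
qed

lemma entropy_le_entropy_marginal:
  assumes "finite S2" "S1 \<subseteq> S2" "is_dist S2 Q"
  shows "entropy S2 Q \<le> entropy S1 (marginal S1 S2 Q) + card (S2 - S1) * ln 2"
proof -
  define N :: real where "N = 2 ^ card (S2 - S1)"
  let ?M = "marginal S1 S2 Q"
  have "?M v * ln (?M v) - ?M v * ln N \<le> marginal S1 S2 (\<lambda>u. Q u * ln (Q u)) v"
    if "v \<in> Pow S1" for v
  proof -
    have "v \<in> {u \<in> Pow S2. u \<inter> S1 = v}" using that assms(2) by auto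
    then have "?M v * ln (?M v / N) \<le> marginal S1 S2 (\<lambda>u. Q u * ln (Q u)) v"
      using log_sum_inequality_uniform[of "{u \<in> Pow S2. u \<inter> S1 = v}" Q]
        card_restriction_fiber[OF assms(1,2)] that assms
      unfolding marginal_def pushforward_def N_def by (auto simp: is_dist_def)
    moreover have "0 \<le> ?M v"
      using is_dist_marginal[OF assms] by (simp add: is_dist_def)
    ultimately show ?thesis by (simp add: xlnx_divide N_def)
  qed
  then have "(\<Sum>v\<in>Pow S1. ?M v * ln (?M v) - ?M v * ln N) \<le> (\<Sum>u\<in>Pow S2. Q u * ln (Q u))"
    unfolding sum_marginal[OF assms(1,2), symmetric] by (intro sum_mono) auto
  moreover have "(\<Sum>v\<in>Pow S1. ?M v * ln (?M v) - ?M v * ln N) = (\<Sum>v\<in>Pow S1. ?M v * ln (?M v)) - ln N"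
    using is_dist_marginal[OF assms] by (simp add: sum_subtractf is_dist_def flip: sum_distrib_right)
  ultimately show ?thesis by (simp add: entropy_def N_def ln_realpow)
qed

lemma marginal_ME:
  assumes "finite S2" "S1 \<subseteq> S2" "\<forall>c\<in>R. constr_over S1 c" "is_dist S1 (ME S1 R)"
  shows "marginal S1 S2 (ME S2 R) = ME S1 R"
proof (cases "Mod S1 R = {}")
  case True
  txt \<open>Then ME is the junk value THE of an unsatisfiable predicate, the same for S1 and S2.\<close>
  then have "Mod S2 R = {}"
    using marginal_in_Mod[OF assms(1-3)] by blast
  with True have "ME S2 R = ME S1 R"
    unfolding ME_def by simp
  with assms show ?thesis
    by (simp add: marginal_eq_self is_dist_def)
next
  case False
  have "finite S1" using assms(1,2) by (rule finite_subset[rotated])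
  note ME1 = ME_max_entropy[OF this False]
  have "uniform_extension S1 S2 (ME S1 R) \<in> Mod S2 R"
    using uniform_extension_in_Mod[OF assms(1-3) ME1(1)] .
  then have "Mod S2 R \<noteq> {}" by blast
  note ME2 = ME_max_entropy[OF assms(1) this]
  have dists: "is_dist S1 (ME S1 R)" "is_dist S2 (ME S2 R)"
    using ME1(1) ME2(1) by (auto simp: Mod_def)
  have "entropy S1 (ME S1 R) + card (S2 - S1) * ln 2 = entropy S2 (uniform_extension S1 S2 (ME S1 R))"
    using entropy_uniform_extension[OF assms(1,2) dists(1)] by simp
  also have "\<dots> \<le> entropy S2 (ME S2 R)"
    using ME2(2) \<open>uniform_extension S1 S2 (ME S1 R) \<in> Mod S2 R\<close> by blast
  also have "\<dots> \<le> entropy S1 (marginal S1 S2 (ME S2 R)) + card (S2 - S1) * ln 2"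
    using entropy_le_entropy_marginal[OF assms(1,2) dists(2)] .
  finally have "entropy S1 (ME S1 R) \<le> entropy S1 (marginal S1 S2 (ME S2 R))" by simp
  with ME1(2) have "\<forall>Q\<in>Mod S1 R. entropy S1 Q \<le> entropy S1 (marginal S1 S2 (ME S2 R))"
    by force
  with \<open>finite S1\<close> marginal_in_Mod[OF assms(1-3) ME2(1)] show ?thesis
    by (intro ME_eqI[symmetric])
qed

section \<open>Transferring ME-models between signatures\<close>

definition restrict_world ::
    "'p set \<Rightarrow> 'c set \<Rightarrow> 'r set \<Rightarrow> ('c, 'r, 'd, 'p) world \<Rightarrow> ('c, 'r, 'd, 'p) world" where
  "restrict_world S NC NR w = w\<lparr>wcon := \<lambda>A. if A \<in> NC then wcon w A else {},
     wrole := \<lambda>r. if r \<in> NR then wrole w r else {}, wval := wval w \<inter> S\<rparr>"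

lemma restrict_world_simps [simp]:
  "wdom (restrict_world S NC NR w) = wdom w"
  "wcon (restrict_world S NC NR w) A = (if A \<in> NC then wcon w A else {})"
  "wrole (restrict_world S NC NR w) r = (if r \<in> NR then wrole w r else {})"
  "wval (restrict_world S NC NR w) = wval w \<inter> S"
  by (simp_all add: restrict_world_def)

definition set_wval :: "('c, 'r, 'd, 'p) world \<times> 'p set \<Rightarrow> ('c, 'r, 'd, 'p) world" where
  "set_wval = (\<lambda>(w, u). w\<lparr>wval := u\<rparr>)"

lemma is_world_restrict_world:
  "is_world S' NC' NR' w \<Longrightarrow> is_world S NC NR (restrict_world S NC NR w)"
  unfolding is_world_def by auto

lemma is_world_wval_update:
  "is_world S NC NR w \<Longrightarrow> NC \<subseteq> NC' \<Longrightarrow> NR \<subseteq> NR' \<Longrightarrow> u \<subseteq> S'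
    \<Longrightarrow> is_world S' NC' NR' (w\<lparr>wval := u\<rparr>)"
  unfolding is_world_def by auto

lemma cext_restrict_world:
  "concept_over NC NR C \<Longrightarrow> cext (restrict_world S NC NR w) C = cext w C"
  by (induction C) (auto simp: concept_over_def)

lemma cext_wval_update [simp]: "cext (w\<lparr>wval := u\<rparr>) C = cext w C"
  by (induction C) auto

lemma models_gci_restrict_world:
  assumes "kb_over S NC NR K" "g \<in> snd K"
  shows "models_gci (restrict_world S NC NR w) g = models_gci w g"
  using assms unfolding kb_over_def models_gci_def
  by (auto simp: cext_restrict_world psat_Int split: prod.splits)

lemma models_gci_wval_update:
  assumes "kb_over S NC NR K" "g \<in> snd K" "wval w = u \<inter> S"
  shows "models_gci (w\<lparr>wval := u\<rparr>) g = models_gci w g"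
  using assms unfolding kb_over_def models_gci_def
  by (auto simp: psat_Int split: prod.splits)

lemma induced_dist_eq_pushforward: "induced_dist W Pw = pushforward wval W Pw"
  by (simp add: induced_dist_def pushforward_def fun_eq_iff)

lemma is_dist_induced_dist:
  assumes "finite S" "alcp_interp S NC NR W Pw"
  shows "is_dist S (induced_dist W Pw)"
proof -
  have W: "finite W" "\<forall>w\<in>W. wval w \<subseteq> S" "\<forall>w\<in>W. 0 \<le> Pw w" "sum Pw W = 1"
    using assms(2) by (auto simp: alcp_interp_def is_world_def)
  then have "sum (induced_dist W Pw) (Pow S) = 1"
    using assms(1) unfolding induced_dist_eq_pushforward by (subst sum_pushforward_total) auto
  moreover have "induced_dist W Pw v = 0" if "v \<notin> Pow S" for v
    using W that unfolding induced_dist_def by (intro sum.neutral) auto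
  ultimately show ?thesis
    using W unfolding is_dist_def induced_dist_eq_pushforward by (auto intro: pushforward_nonneg)
qed

lemma ME_consistent_is_dist:
  fixes S :: "'p set" and K :: "('c, 'r, 'p) kb"
  assumes "finite S" "ME_consistent TYPE('d) S NC NR K"
  shows "is_dist S (ME S (fst K))"
proof -
  obtain W :: "('c, 'r, 'd, 'p) world set" and Pw where "(W, Pw) \<in> Mod_ME S NC NR K"
    using assms(2) unfolding ME_consistent_def by auto
  then have "alcp_interp S NC NR W Pw" "induced_dist W Pw = ME S (fst K)"
    by (auto simp: Mod_ME_def)
  with is_dist_induced_dist[OF assms(1) this(1)] show ?thesis by simp
qed

lemma alcp_interp_pushforward:
  assumes "finite A" "A \<noteq> {}" "\<And>x. x \<in> A \<Longrightarrow> 0 \<le> p x" "sum p A = 1"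
    and "\<And>x. x \<in> A \<Longrightarrow> is_world S NC NR (f x)"
  shows "alcp_interp S NC NR (f ` A) (pushforward f A p)"
  using assms sum_pushforward_total[OF assms(1) finite_imageI[OF assms(1)], where f = f and p = p]
  unfolding alcp_interp_def by (auto intro: pushforward_nonneg)

lemma cond_pr_pushforward:
  assumes "finite A"
  shows "cond_pr (f ` A) (pushforward f A p) C D k
    = (\<Sum>x\<in>{x \<in> A. psat (wval (f x)) k \<and> cext (f x) C \<subseteq> cext (f x) D}. p x)
      / (\<Sum>x\<in>{x \<in> A. psat (wval (f x)) k}. p x)"
  unfolding cond_pr_def using assms by (simp add: sum_pushforward)

lemma restrict_world_in_Mod_ME:
  fixes W :: "('c, 'r, 'd, 'p) world set"
  assumes "finite S2" "S1 \<subseteq> S2" "kb_over S1 NC1 NR1 K"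
    and "(W, Pw) \<in> Mod_ME S2 NC2 NR2 K"
    and "marginal S1 S2 (ME S2 (fst K)) = ME S1 (fst K)"
  shows "(restrict_world S1 NC1 NR1 ` W, pushforward (restrict_world S1 NC1 NR1) W Pw)
    \<in> Mod_ME S1 NC1 NR1 K"
proof -
  let ?\<rho> = "restrict_world S1 NC1 NR1"
  have W: "alcp_interp S2 NC2 NR2 W Pw" "\<forall>w\<in>W. \<forall>g\<in>snd K. models_gci w g"
    "induced_dist W Pw = ME S2 (fst K)"
    using assms(4) by (auto simp: Mod_ME_def)
  then have fin: "finite W" and vals: "wval ` W \<subseteq> Pow S2"
    by (auto simp: alcp_interp_def is_world_def)
  have "alcp_interp S1 NC1 NR1 (?\<rho> ` W) (pushforward ?\<rho> W Pw)"
    using W(1) by (intro alcp_interp_pushforward)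
      (auto simp: alcp_interp_def intro: is_world_restrict_world)
  moreover have "\<forall>w\<in>?\<rho> ` W. \<forall>g\<in>snd K. models_gci w g"
    using W(2) by (auto simp: models_gci_restrict_world[OF assms(3)])
  moreover have "induced_dist (?\<rho> ` W) (pushforward ?\<rho> W Pw) = ME S1 (fst K)"
  proof -
    have "induced_dist (?\<rho> ` W) (pushforward ?\<rho> W Pw) = pushforward (wval \<circ> ?\<rho>) W Pw"
      using fin by (simp add: induced_dist_eq_pushforward pushforward_pushforward)
    also have "\<dots> = pushforward ((\<lambda>u. u \<inter> S1) \<circ> wval) W Pw"
      by (simp add: comp_def)
    also have "\<dots> = marginal S1 S2 (induced_dist W Pw)"
      using fin vals assms(1)
      by (simp add: marginal_def induced_dist_eq_pushforward pushforward_pushforward)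
    finally show ?thesis using W(3) assms(5) by simp
  qed
  ultimately show ?thesis unfolding Mod_ME_def by auto
qed

lemma cond_pr_restrict_world:
  assumes "finite W" "concept_over NC NR C" "concept_over NC NR D" "pvars k \<subseteq> S"
  shows "cond_pr (restrict_world S NC NR ` W) (pushforward (restrict_world S NC NR) W Pw) C D k
    = cond_pr W Pw C D k"
  unfolding cond_pr_pushforward[OF assms(1)]
  using assms(2-4) by (simp add: cond_pr_def cext_restrict_world psat_Int)

lemma glued_worlds_in_Mod_ME:
  fixes W :: "('c, 'r, 'd, 'p) world set"
  assumes "finite S2" "S1 \<subseteq> S2" "NC1 \<subseteq> NC2" "NR1 \<subseteq> NR2" "kb_over S1 NC1 NR1 K"
    and "(W, Pw) \<in> Mod_ME S1 NC1 NR1 K"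
    and "is_dist S2 (ME S2 (fst K))" "marginal S1 S2 (ME S2 (fst K)) = ME S1 (fst K)"
  defines "Q \<equiv> glued wval W (\<lambda>u. u \<inter> S1) (Pow S2)"
    and "q \<equiv> glued_weight wval W Pw (ME S2 (fst K))"
  shows "(set_wval ` Q, pushforward set_wval Q q) \<in> Mod_ME S2 NC2 NR2 K"
proof -
  have W: "alcp_interp S1 NC1 NR1 W Pw" "\<forall>w\<in>W. \<forall>g\<in>snd K. models_gci w g"
    "induced_dist W Pw = ME S1 (fst K)"
    using assms(6) by (auto simp: Mod_ME_def)
  then have fin: "finite W" and nonneg: "\<And>w. w \<in> W \<Longrightarrow> 0 \<le> Pw w"
    by (auto simp: alcp_interp_def)
  have P2: "0 \<le> ME S2 (fst K) u" "\<not> u \<subseteq> S2 \<Longrightarrow> ME S2 (fst K) u = 0" for u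
    using assms(7) by (auto simp: is_dist_def)
  have glue: "pushforward (\<lambda>u. u \<inter> S1) (Pow S2) (ME S2 (fst K)) = pushforward wval W Pw"
    using W(3) assms(8) by (simp add: marginal_def induced_dist_eq_pushforward)
  have finQ: "finite Q"
    unfolding Q_def using fin assms(1) by (simp add: finite_glued)
  have inQ: "(w, u) \<in> Q \<longleftrightarrow> w \<in> W \<and> u \<subseteq> S2 \<and> wval w = u \<inter> S1" for w u
    unfolding Q_def glued_def by auto
  have "alcp_interp S2 NC2 NR2 (set_wval ` Q) (pushforward set_wval Q q)"
  proof (rule alcp_interp_pushforward[OF finQ])
    obtain w where "w \<in> W" "wval w \<subseteq> S1"
      using W(1) by (auto simp: alcp_interp_def is_world_def)
    then have "(w, wval w) \<in> Q" using assms(2) inQ by auto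
    then show "Q \<noteq> {}" by blast
    show "0 \<le> q z" if "z \<in> Q" for z
      using that nonneg P2(1) unfolding q_def by (cases z) (auto simp: inQ intro: glued_weight_nonneg)
    show "sum q Q = 1"
      using sum_glued_fst[OF fin _ nonneg glue, where P = "\<lambda>_. True"] assms(1) W(1)
      unfolding Q_def q_def alcp_interp_def by simp
    show "is_world S2 NC2 NR2 (set_wval z)" if "z \<in> Q" for z
      using that W(1) assms(3,4)
      by (cases z) (auto simp: inQ set_wval_def alcp_interp_def intro: is_world_wval_update)
  qed
  moreover have "\<forall>w\<in>set_wval ` Q. \<forall>g\<in>snd K. models_gci w g"
    using W(2) by (auto simp: inQ set_wval_def models_gci_wval_update[OF assms(5)])
  moreover have "induced_dist (set_wval ` Q) (pushforward set_wval Q q) = ME S2 (fst K)"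
  proof -
    have "induced_dist (set_wval ` Q) (pushforward set_wval Q q) = pushforward (wval \<circ> set_wval) Q q"
      using finQ by (simp add: induced_dist_eq_pushforward pushforward_pushforward)
    also have "\<dots> = pushforward snd Q q"
      by (rule pushforward_cong) (auto simp: set_wval_def)
    also have "\<dots> = ME S2 (fst K)"
    proof
      fix u
      show "pushforward snd Q q u = ME S2 (fst K) u"
        using pushforward_snd_glued[OF fin _ _ glue, where y = u] assms(1) P2
        unfolding Q_def q_def by auto
    qed
    finally show ?thesis .
  qed
  ultimately show ?thesis unfolding Mod_ME_def by auto
qed

lemma cond_pr_glued:
  assumes "finite S2" "finite W" "\<And>w. w \<in> W \<Longrightarrow> 0 \<le> Pw w"
    and "marginal S1 S2 P2 = induced_dist W Pw" and "pvars k \<subseteq> S1"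
  defines "Q \<equiv> glued wval W (\<lambda>u. u \<inter> S1) (Pow S2)"
  shows "cond_pr (set_wval ` Q) (pushforward set_wval Q (glued_weight wval W Pw P2)) C D k
    = cond_pr W Pw C D k"
proof -
  let ?q = "glued_weight wval W Pw P2"
  have glue: "pushforward (\<lambda>u. u \<inter> S1) (Pow S2) P2 = pushforward wval W Pw"
    using assms(4) by (simp add: marginal_def induced_dist_eq_pushforward)
  have "psat (wval (set_wval z)) k = psat (wval (fst z)) k"
    and "cext (set_wval z) = cext (fst z)" if "z \<in> Q" for z
    using that psat_Int[OF assms(5)] by (auto simp: Q_def glued_def set_wval_def)
  then have "{z \<in> Q. psat (wval (set_wval z)) k \<and> cext (set_wval z) C \<subseteq> cext (set_wval z) D}
      = {z \<in> Q. psat (wval (fst z)) k \<and> cext (fst z) C \<subseteq> cext (fst z) D}"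
    and "{z \<in> Q. psat (wval (set_wval z)) k} = {z \<in> Q. psat (wval (fst z)) k}"
    by auto
  moreover have "finite Q"
    unfolding Q_def using assms(1,2) by (simp add: finite_glued)
  ultimately have "cond_pr (set_wval ` Q) (pushforward set_wval Q ?q) C D k
      = (\<Sum>z\<in>{z \<in> Q. psat (wval (fst z)) k \<and> cext (fst z) C \<subseteq> cext (fst z) D}. ?q z)
        / (\<Sum>z\<in>{z \<in> Q. psat (wval (fst z)) k}. ?q z)"
    by (simp only: cond_pr_pushforward)
  also have "\<dots> = cond_pr W Pw C D k"
  proof -
    have "finite (Pow S2)" using assms(1) by simp
    note sums = sum_glued_fst[OF assms(2) this assms(3) glue]
    have "(\<Sum>z\<in>{z \<in> Q. psat (wval (fst z)) k \<and> cext (fst z) C \<subseteq> cext (fst z) D}. ?q z)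
        = (\<Sum>w\<in>{w \<in> W. psat (wval w) k \<and> cext w C \<subseteq> cext w D}. Pw w)"
      unfolding Q_def by (rule sums)
    moreover have "(\<Sum>z\<in>{z \<in> Q. psat (wval (fst z)) k}. ?q z) = (\<Sum>w\<in>{w \<in> W. psat (wval w) k}. Pw w)"
      unfolding Q_def by (rule sums)
    ultimately show ?thesis unfolding cond_pr_def by simp
  qed
  finally show ?thesis .
qed

lemma cond_pr_image_Mod_ME_restrict_subset:
  fixes K :: "('c, 'r, 'p) kb"
  assumes "finite S2" "S1 \<subseteq> S2" "kb_over S1 NC1 NR1 K"
    and "concept_over NC1 NR1 C" "concept_over NC1 NR1 D" "pvars k \<subseteq> S1"
    and "marginal S1 S2 (ME S2 (fst K)) = ME S1 (fst K)"
  shows "(\<lambda>(W, Pw). cond_pr W Pw C D k) `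
      (Mod_ME S2 NC2 NR2 K :: (('c, 'r, 'd, 'p) world set \<times> _) set)
    \<subseteq> (\<lambda>(W, Pw). cond_pr W Pw C D k) `
      (Mod_ME S1 NC1 NR1 K :: (('c, 'r, 'd, 'p) world set \<times> _) set)"
proof clarify
  fix W :: "('c, 'r, 'd, 'p) world set" and Pw
  assume M: "(W, Pw) \<in> Mod_ME S2 NC2 NR2 K"
  then have "finite W" by (simp add: Mod_ME_def alcp_interp_def)
  with assms have eq: "cond_pr W Pw C D k
      = cond_pr (restrict_world S1 NC1 NR1 ` W) (pushforward (restrict_world S1 NC1 NR1) W Pw) C D k"
    by (simp add: cond_pr_restrict_world)
  show "cond_pr W Pw C D k \<in> (\<lambda>(W, Pw). cond_pr W Pw C D k) `
      (Mod_ME S1 NC1 NR1 K :: (('c, 'r, 'd, 'p) world set \<times> _) set)"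
    by (rule image_eqI[OF _ restrict_world_in_Mod_ME[OF assms(1-3) M assms(7)]]) (simp add: eq)
qed

lemma cond_pr_image_Mod_ME_extend_subset:
  fixes K :: "('c, 'r, 'p) kb"
  assumes "finite S2" "S1 \<subseteq> S2" "NC1 \<subseteq> NC2" "NR1 \<subseteq> NR2" "kb_over S1 NC1 NR1 K"
    and "pvars k \<subseteq> S1" and "is_dist S2 (ME S2 (fst K))"
    and "marginal S1 S2 (ME S2 (fst K)) = ME S1 (fst K)"
  shows "(\<lambda>(W, Pw). cond_pr W Pw C D k) `
      (Mod_ME S1 NC1 NR1 K :: (('c, 'r, 'd, 'p) world set \<times> _) set)
    \<subseteq> (\<lambda>(W, Pw). cond_pr W Pw C D k) `
      (Mod_ME S2 NC2 NR2 K :: (('c, 'r, 'd, 'p) world set \<times> _) set)"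
proof clarify
  fix W :: "('c, 'r, 'd, 'p) world set" and Pw
  assume M: "(W, Pw) \<in> Mod_ME S1 NC1 NR1 K"
  then have "finite W" "\<And>w. w \<in> W \<Longrightarrow> 0 \<le> Pw w" "induced_dist W Pw = ME S1 (fst K)"
    by (auto simp: Mod_ME_def alcp_interp_def)
  with assms have eq: "cond_pr W Pw C D k = cond_pr (set_wval ` glued wval W (\<lambda>u. u \<inter> S1) (Pow S2))
      (pushforward set_wval (glued wval W (\<lambda>u. u \<inter> S1) (Pow S2))
        (glued_weight wval W Pw (ME S2 (fst K)))) C D k"
    by (simp add: cond_pr_glued)
  show "cond_pr W Pw C D k \<in> (\<lambda>(W, Pw). cond_pr W Pw C D k) `
      (Mod_ME S2 NC2 NR2 K :: (('c, 'r, 'd, 'p) world set \<times> _) set)"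
    by (rule image_eqI[OF _ glued_worlds_in_Mod_ME[OF assms(1-5) M assms(7,8)]]) (simp add: eq)
qed

theorem theorem7:
  fixes S1 S2 :: "'p set" and NC1 NC2 :: "'c set" and NR1 NR2 :: "'r set"
    and K :: "('c, 'r, 'p) kb" and C D :: "('c, 'r) concept" and k :: "'p pform"
  assumes "finite S1" and "finite S2"
    and "kb_over S1 NC1 NR1 K" and "kb_over S2 NC2 NR2 K"
    and "ME_consistent TYPE('d) S1 NC1 NR1 K" and "ME_consistent TYPE('d) S2 NC2 NR2 K"
    and "S1 \<subseteq> S2" and "NC1 \<subseteq> NC2" and "NR1 \<subseteq> NR2"
    and "concept_over NC1 NR1 C" and "concept_over NC1 NR1 D" and "pvars k \<subseteq> S1"
  shows "belief_interval TYPE('d) S1 NC1 NR1 K C D k = belief_interval TYPE('d) S2 NC2 NR2 K C D k"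
proof -
  have dist1: "is_dist S1 (ME S1 (fst K))" and dist2: "is_dist S2 (ME S2 (fst K))"
    using ME_consistent_is_dist assms(1,2,5,6) by blast+
  have "marginal S1 S2 (ME S2 (fst K)) = ME S1 (fst K)"
    using assms(2,3,7) dist1 by (intro marginal_ME) (auto simp: kb_over_def)
  then have "(\<lambda>(W, Pw). cond_pr W Pw C D k) `
        (Mod_ME S1 NC1 NR1 K :: (('c, 'r, 'd, 'p) world set \<times> _) set)
      = (\<lambda>(W, Pw). cond_pr W Pw C D k) `
        (Mod_ME S2 NC2 NR2 K :: (('c, 'r, 'd, 'p) world set \<times> _) set)"
    using cond_pr_image_Mod_ME_extend_subset[OF assms(2,7-9,3,12) dist2]
      cond_pr_image_Mod_ME_restrict_subset[OF assms(2,7,3,10-12)]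
    by (intro equalityI)
  then show ?thesis unfolding belief_interval_def Let_def by (simp only:)
qed

end
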